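(* The pair $\langle \alpha^{\mathsf{v}}, \gamma^{\mathsf{v}}\rangle$ forms a Galois connection between the concrete domain $\mathcal{C}$ and the view domain $\mathcal{A}^{\mathsf{v}}$.
   Context: Setting (heap programs): $\mathit{Var}=\mathit{Var}_p\uplus\mathit{Var}_d$ are pointer/data program variables, $\mathit{Fld}=\mathit{Fld}_p\uplus\mathit{Fld}_d$ pointer/data fields, $\mathit{Addr}$ a set of addresses containing $\mathsf{null}$, $\mathit{Val}=\mathit{Addr}\uplus\mathbb{Z}$, $\mathit{Loc}$ a finite set of control locations. A stack $s:\mathit{Var}\to\mathit{Val}$ is safe if $s(\mathit{Var}_p)\subseteq\mathit{Addr}$ and $s(\mathit{Var}_d)\subseteq\mathbb{Z}$. A heap is a partial map $h:\mathit{Addr}\rightharpoonup\mathit{FldVal}$ with $\mathit{FldVal}=(\mathit{Fld}\uplus\{\mathsf{free}\})\to\mathit{Val}$; it is safe if for all $a\in\mathrm{dom}(h)$, $h(a)(\mathit{Fld}_p)\subseteq\mathit{Addr}\cap\mathrm{dom}(h)$ and $h(a)(\mathit{Fld}_d\uplus\{\mathsf{free}\})\subseteq\mathbb{Z}$; $\mathit{Heap}$ is the set of safe heaps. A state is $\langle\ell,\langle s,h\rangle\rangle$ with $\ell\in\mathit{Loc}$, $s$ a safe stack, $h$ a safe heap and $\mathrm{rng}(s)\cap\mathit{Addr}\subseteq\mathrm{dom}(h)$; $\mathit{State}$ is the set of states. The concrete domain is $\mathcal{C}=\mathcal{P}(\mathit{State})\cup\{\top\}$ ordered by $X\sqsubseteq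 Y$ iff ($X,Y$ are sets and $X\subseteq Y$) or $Y=\top$. View abstraction: the view states are $\mathit{State}^{\mathsf{v}}=\mathit{Loc}\times\{\top\}\cup\{\langle\ell,\langle s,h\rangle\rangle \mid \mathrm{dom}(h)=s(\mathit{Var}_p)\}$ (the view heap $h$ may point outside its domain, so need not be safe). The abstract domain is $\mathcal{A}^{\mathsf{v}}=(\mathcal{P}(\mathit{State}^{\mathsf{v}})\times\mathcal{P}(\mathit{Addr}\times\mathit{FldVal}))\cup\{\top\}$, ordered by componentwise subset inclusion with $\top$ as top element; it is a complete lattice. For a view heap $h$ and $H\subseteq\mathit{Addr}\times\mathit{FldVal}$ (the space invariant), the completion $H\triangleright h$ is the set of safe heaps $h'$ with $h'=h\uplus h''$ for some $h''\in\mathit{Heap}$ whose graph is contained in $H$. The concretization is $\gamma^{\mathsf{v}}(\Sigma,H)=\{\langle\ell,\langle s,h'\rangle\rangle \mid \langle\ell,\langle s,h\rangle\rangle\in\Sigma \wedge h'\in H\triangleright h\}$ and $\gamma^{\mathsf{v}}(\top)=\top$. The abstraction $\alpha^{\mathsf{v}}:\mathcal{C}\to\mathcal{A}^{\mathsf{v}}$ is defined as $\alpha^{\mathsf{v}}(\Sigma)=$ the greatest lower bound (meet) in $\mathcal{A}^{\mathsf{v}}$ of the set $\{V\in\mathcal{A}^{\mathsf{v}} \mid \Sigma\sqsubseteq\gamma^{\mathsf{v}}(V)\}$. *)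

theory Defs
  imports Main
begin

datatype 'a val = Ad 'a | Dt int

(* FldVal = (Fld + {free}) -> Val ; None encodes the extra field free *)
type_synonym ('f, 'a) fldval = "'f option \<Rightarrow> 'a val"
type_synonym ('v, 'a) stack = "'v \<Rightarrow> 'a val"
type_synonym ('f, 'a) heap = "'a \<rightharpoonup> ('f, 'a) fldval"

(* Vp : pointer variables (Var_d is its complement); Fp : pointer fields *)
definition safe_stack :: "'v set \<Rightarrow> ('v, 'a) stack \<Rightarrow> bool" where
  "safe_stack Vp s \<longleftrightarrow>
     (\<forall>x\<in>Vp. \<exists>b. s x = Ad b) \<and> (\<forall>x. x \<notin> Vp \<longrightarrow> (\<exists>i. s x = Dt i))"

definition safe_heap :: "'f set \<Rightarrow> ('f, 'a) heap \<Rightarrow> bool" where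
  "safe_heap Fp h \<longleftrightarrow>
     (\<forall>a fv. h a = Some fv \<longrightarrow>
        (\<forall>f\<in>Fp. \<exists>b. fv (Some f) = Ad b \<and> b \<in> dom h) \<and>
        (\<forall>f. f \<notin> Fp \<longrightarrow> (\<exists>i. fv (Some f) = Dt i)) \<and>
        (\<exists>i. fv None = Dt i))"

type_synonym ('l, 'v, 'f, 'a) state = "'l \<times> (('v, 'a) stack \<times> ('f, 'a) heap)"

definition is_state :: "'v set \<Rightarrow> 'f set \<Rightarrow> ('l, 'v, 'f, 'a) state \<Rightarrow> bool" where
  "is_state Vp Fp st \<longleftrightarrow>
     (case st of (l, (s, h)) \<Rightarrow>
        safe_stack Vp s \<and> safe_heap Fp h \<and> {b. Ad b \<in> range s} \<subseteq> dom h)"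

datatype ('l, 'v, 'f, 'a) vstate = VTop 'l | VSt 'l "('v, 'a) stack" "('f, 'a) heap"

definition is_vstate :: "'v set \<Rightarrow> ('l, 'v, 'f, 'a) vstate \<Rightarrow> bool" where
  "is_vstate Vp vs \<longleftrightarrow>
     (case vs of VTop l \<Rightarrow> True
      | VSt l s h \<Rightarrow> safe_stack Vp s \<and> dom h = {b. \<exists>x\<in>Vp. s x = Ad b})"

datatype 'x cdom = CSet "'x set" | CTop

definition c_carrier :: "'v set \<Rightarrow> 'f set \<Rightarrow> ('l, 'v, 'f, 'a) state cdom \<Rightarrow> bool" where
  "c_carrier Vp Fp X \<longleftrightarrow>
     (case X of CTop \<Rightarrow> True | CSet S \<Rightarrow> (\<forall>st\<in>S. is_state Vp Fp st))"

definition c_le :: "'x cdom \<Rightarrow> 'x cdom \<Rightarrow> bool" where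
  "c_le X Y \<longleftrightarrow> Y = CTop \<or> (\<exists>A B. X = CSet A \<and> Y = CSet B \<and> A \<subseteq> B)"

datatype ('l, 'v, 'f, 'a) adom =
  AElem "('l, 'v, 'f, 'a) vstate set" "('a \<times> ('f, 'a) fldval) set" | ATop

definition a_carrier :: "'v set \<Rightarrow> ('l, 'v, 'f, 'a) adom \<Rightarrow> bool" where
  "a_carrier Vp V \<longleftrightarrow>
     (case V of ATop \<Rightarrow> True | AElem S H \<Rightarrow> (\<forall>vs\<in>S. is_vstate Vp vs))"

definition a_le :: "('l, 'v, 'f, 'a) adom \<Rightarrow> ('l, 'v, 'f, 'a) adom \<Rightarrow> bool" where
  "a_le V W \<longleftrightarrow> W = ATop \<or>
     (\<exists>S H S' H'. V = AElem S H \<and> W = AElem S' H' \<and> S \<subseteq> S' \<and> H \<subseteq> H')"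

definition graph_of :: "('f, 'a) heap \<Rightarrow> ('a \<times> ('f, 'a) fldval) set" where
  "graph_of h = {(a, fv). h a = Some fv}"

definition completion ::
  "'f set \<Rightarrow> ('a \<times> ('f, 'a) fldval) set \<Rightarrow> ('f, 'a) heap \<Rightarrow> ('f, 'a) heap set" where
  "completion Fp H h = {h'. safe_heap Fp h' \<and>
     (\<exists>h''. safe_heap Fp h'' \<and> graph_of h'' \<subseteq> H \<and>
            dom h \<inter> dom h'' = {} \<and> h' = h ++ h'')}"

definition gamma_v ::
  "'f set \<Rightarrow> ('l, 'v, 'f, 'a) adom \<Rightarrow> ('l, 'v, 'f, 'a) state cdom" where
  "gamma_v Fp V = (case V of ATop \<Rightarrow> CTop
     | AElem S H \<Rightarrow> CSet {(l, (s, h')). \<exists>h. VSt l s h \<in> S \<and> h' \<in> completion Fp H h})"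

definition a_is_glb :: "'v set \<Rightarrow> ('l, 'v, 'f, 'a) adom set \<Rightarrow> ('l, 'v, 'f, 'a) adom \<Rightarrow> bool" where
  "a_is_glb Vp M V \<longleftrightarrow> a_carrier Vp V \<and> (\<forall>W\<in>M. a_le V W) \<and>
     (\<forall>U. a_carrier Vp U \<and> (\<forall>W\<in>M. a_le U W) \<longrightarrow> a_le U V)"

definition alpha_v ::
  "'v set \<Rightarrow> 'f set \<Rightarrow> ('l, 'v, 'f, 'a) state cdom \<Rightarrow> ('l, 'v, 'f, 'a) adom" where
  "alpha_v Vp Fp X = (THE V. a_is_glb Vp {W. a_carrier Vp W \<and> c_le X (gamma_v Fp W)} V)"

definition galois_connection ::
  "('c \<Rightarrow> bool) \<Rightarrow> ('c \<Rightarrow> 'c \<Rightarrow> bool) \<Rightarrow> ('b \<Rightarrow> bool) \<Rightarrow> ('b \<Rightarrow> 'b \<Rightarrow> bool)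
     \<Rightarrow> ('c \<Rightarrow> 'b) \<Rightarrow> ('b \<Rightarrow> 'c) \<Rightarrow> bool" where
  "galois_connection Cc leC Ac leA \<alpha> \<gamma> \<longleftrightarrow>
     (\<forall>X. Cc X \<longrightarrow> Ac (\<alpha> X)) \<and> (\<forall>V. Ac V \<longrightarrow> Cc (\<gamma> V)) \<and>
     (\<forall>X V. Cc X \<longrightarrow> Ac V \<longrightarrow> (leA (\<alpha> X) V \<longleftrightarrow> leC X (\<gamma> V)))"

end

theory Submission
  imports Defs
begin

(* Meets in the view domain are componentwise intersections, and gamma_v preserves them; hence
   alpha_v X is the least W with X below gamma_v W, which is the Galois condition.  Preservation
   of meets holds because the domain of a view heap is fixed by the stack: a concrete heap h'
   determines its splitting h ++ h'' into view heap and completion, h being the restriction of h'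
   to the addresses held by pointer variables. *)

lemma map_le_restrict_dom: "f \<subseteq>\<^sub>m g \<Longrightarrow> g |` dom f = f"
  unfolding map_le_def by (auto simp: restrict_map_def fun_eq_iff dom_def)

lemma map_le_map_add_disjoint: "dom f \<inter> dom g = {} \<Longrightarrow> f \<subseteq>\<^sub>m f ++ g"
  by (metis map_add_comm map_le_map_add)

lemma map_add_restrict_compl: "dom f \<inter> dom g = {} \<Longrightarrow> (f ++ g) |` (- dom f) = g"
  by (auto simp: restrict_map_def map_add_def fun_eq_iff split: option.splits)

lemma map_add_restrict_compl_eq: "f \<subseteq>\<^sub>m g \<Longrightarrow> f ++ g |` (- dom f) = g"
  by (force simp: map_le_def restrict_map_def map_add_def fun_eq_iff split: option.splits)

lemma completion_iff:
  "h' \<in> completion Fp H h \<longleftrightarrow>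
     safe_heap Fp h' \<and> h \<subseteq>\<^sub>m h' \<and> safe_heap Fp (h' |` (- dom h)) \<and> graph_of (h' |` (- dom h)) \<subseteq> H"
proof
  assume "h' \<in> completion Fp H h"
  then obtain h'' where "safe_heap Fp h'" "safe_heap Fp h''" "graph_of h'' \<subseteq> H"
    and disj: "dom h \<inter> dom h'' = {}" and h': "h' = h ++ h''"
    unfolding completion_def by blast
  moreover have "h' |` (- dom h) = h''"
    using disj h' by (simp add: map_add_restrict_compl)
  ultimately show "safe_heap Fp h' \<and> h \<subseteq>\<^sub>m h' \<and> safe_heap Fp (h' |` (- dom h)) \<and>
      graph_of (h' |` (- dom h)) \<subseteq> H"
    by (simp add: map_le_map_add_disjoint)
next
  assume "safe_heap Fp h' \<and> h \<subseteq>\<^sub>m h' \<and> safe_heap Fp (h' |` (- dom h)) \<and>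
      graph_of (h' |` (- dom h)) \<subseteq> H"
  then show "h' \<in> completion Fp H h"
    unfolding completion_def
    by (intro CollectI conjI exI[of _ "h' |` (- dom h)"]) (auto simp: map_add_restrict_compl_eq)
qed

lemma completion_Inter:
  "Hs \<noteq> {} \<Longrightarrow> completion Fp (\<Inter>Hs) h = (\<Inter>H\<in>Hs. completion Fp H h)"
  by (rule set_eqI) (simp only: INT_iff completion_iff, blast)

definition stack_addrs :: "'v set \<Rightarrow> ('v, 'a) stack \<Rightarrow> 'a set" where
  "stack_addrs Vp s = {b. \<exists>x\<in>Vp. s x = Ad b}"

lemma is_vstate_VSt_iff:
  "is_vstate Vp (VSt l s h) \<longleftrightarrow> safe_stack Vp s \<and> dom h = stack_addrs Vp s"
  by (simp add: is_vstate_def stack_addrs_def)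

lemma completion_view_heap:
  assumes "is_vstate Vp (VSt l s h)" and "h' \<in> completion Fp H h"
  shows "h = h' |` stack_addrs Vp s"
proof -
  have "h \<subseteq>\<^sub>m h'"
    using assms(2) by (simp add: completion_iff)
  moreover have "dom h = stack_addrs Vp s"
    using assms(1) by (simp add: is_vstate_VSt_iff)
  ultimately show ?thesis
    by (metis map_le_restrict_dom)
qed

lemma gamma_v_AElem_canonical:
  assumes "a_carrier Vp (AElem S H)"
  shows "gamma_v Fp (AElem S H) = CSet {(l, s, h').
    VSt l s (h' |` stack_addrs Vp s) \<in> S \<and>
    h' \<in> completion Fp H (h' |` stack_addrs Vp s)}"
proof -
  have "(\<exists>h. VSt l s h \<in> S \<and> h' \<in> completion Fp H h) \<longleftrightarrow>
      VSt l s (h' |` stack_addrs Vp s) \<in> S \<and>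
      h' \<in> completion Fp H (h' |` stack_addrs Vp s)" for l s h'
  proof
    assume "\<exists>h. VSt l s h \<in> S \<and> h' \<in> completion Fp H h"
    then obtain h where "VSt l s h \<in> S" and "h' \<in> completion Fp H h" by blast
    moreover have "h = h' |` stack_addrs Vp s"
      using assms calculation by (auto simp: a_carrier_def intro: completion_view_heap)
    ultimately show "VSt l s (h' |` stack_addrs Vp s) \<in> S \<and>
      h' \<in> completion Fp H (h' |` stack_addrs Vp s)" by simp
  qed blast
  then show ?thesis
    unfolding gamma_v_def by simp
qed

lemma gamma_v_carrier: "a_carrier Vp V \<Longrightarrow> c_carrier Vp Fp (gamma_v Fp V)"
proof (cases V)
  case (AElem S H)
  assume car: "a_carrier Vp V"
  have "is_state Vp Fp (l, s, h')" if "VSt l s h \<in> S" and "h' \<in> completion Fp H h" for l s h h'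
  proof -
    have "is_vstate Vp (VSt l s h)"
      using car AElem \<open>VSt l s h \<in> S\<close> by (simp add: a_carrier_def)
    then have stack: "safe_stack Vp s" and dom_h: "dom h = stack_addrs Vp s"
      by (simp_all add: is_vstate_VSt_iff)
    have "{b. Ad b \<in> range s} \<subseteq> dom h"
    proof
      fix b assume "b \<in> {b. Ad b \<in> range s}"
      then obtain x where x: "s x = Ad b" by auto
      with stack have "x \<in> Vp" unfolding safe_stack_def by (metis val.distinct(1))
      with x show "b \<in> dom h" unfolding dom_h stack_addrs_def by blast
    qed
    moreover have "safe_heap Fp h'" and "dom h \<subseteq> dom h'"
      using \<open>h' \<in> completion Fp H h\<close> by (auto simp: completion_iff map_le_implies_dom_le)
    ultimately show ?thesis
      using stack unfolding is_state_def by auto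
  qed
  then show ?thesis using AElem unfolding c_carrier_def gamma_v_def by auto
qed (simp add: c_carrier_def gamma_v_def)

lemma gamma_v_mono: "a_le V W \<Longrightarrow> c_le (gamma_v Fp V) (gamma_v Fp W)"
  unfolding a_le_def c_le_def gamma_v_def completion_def by auto blast

lemma c_le_trans: "c_le X Y \<Longrightarrow> c_le Y Z \<Longrightarrow> c_le X Z"
  unfolding c_le_def by auto

definition a_Inf :: "('l, 'v, 'f, 'a) adom set \<Rightarrow> ('l, 'v, 'f, 'a) adom" where
  "a_Inf M = (if \<exists>S H. AElem S H \<in> M
     then AElem (\<Inter>{S. \<exists>H. AElem S H \<in> M}) (\<Inter>{H. \<exists>S. AElem S H \<in> M}) else ATop)"

lemma a_le_antisym: "a_le V W \<Longrightarrow> a_le W V \<Longrightarrow> V = W"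
  unfolding a_le_def by (cases V; cases W) auto

lemma a_is_glb_unique: "a_is_glb Vp M V \<Longrightarrow> a_is_glb Vp M V' \<Longrightarrow> V = V'"
  unfolding a_is_glb_def by (meson a_le_antisym)

lemma a_is_glb_a_Inf:
  assumes "\<forall>W\<in>M. a_carrier Vp W"
  shows "a_is_glb Vp M (a_Inf M)"
proof (cases "\<exists>S H. AElem S H \<in> M")
  case True
  then obtain S0 H0 where S0H0: "AElem S0 H0 \<in> M" by blast
  have "a_carrier Vp (a_Inf M)"
    using True S0H0 assms unfolding a_Inf_def a_carrier_def by fastforce
  moreover have "a_le (a_Inf M) W" if "W \<in> M" for W
    using True that unfolding a_Inf_def a_le_def by (cases W) (auto simp del: Inter_iff)
  moreover have "a_le U (a_Inf M)" if lower: "\<forall>W\<in>M. a_le U W" for U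
  proof -
    obtain S H where U: "U = AElem S H"
      using lower S0H0 unfolding a_le_def by auto
    then have "S \<subseteq> S' \<and> H \<subseteq> H'" if "AElem S' H' \<in> M" for S' H'
      using lower that unfolding a_le_def by fastforce
    then show ?thesis using True U unfolding a_Inf_def a_le_def by auto
  qed
  ultimately show ?thesis unfolding a_is_glb_def by blast
next
  case False
  then have "M \<subseteq> {ATop}" by (metis adom.exhaust insertCI subsetI)
  then show ?thesis using False unfolding a_is_glb_def a_Inf_def a_le_def a_carrier_def by auto
qed

lemma alpha_v_eq_a_Inf:
  "alpha_v Vp Fp X = a_Inf {W. a_carrier Vp W \<and> c_le X (gamma_v Fp W)}"
  unfolding alpha_v_def by (blast intro: the_equality a_is_glb_a_Inf a_is_glb_unique)

lemma c_le_gamma_v_a_Inf: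
  assumes car: "\<forall>W\<in>M. a_carrier Vp W" and above: "\<forall>W\<in>M. c_le X (gamma_v Fp W)"
  shows "c_le X (gamma_v Fp (a_Inf M))"
proof (cases "\<exists>S H. AElem S H \<in> M")
  case True
  then obtain S0 H0 where "AElem S0 H0 \<in> M" by blast
  then obtain A where X: "X = CSet A"
    using above by (cases X) (auto simp: c_le_def gamma_v_def)
  have each:
    "VSt l s (h' |` stack_addrs Vp s) \<in> S \<and> h' \<in> completion Fp H (h' |` stack_addrs Vp s)"
    if "(l, s, h') \<in> A" and "AElem S H \<in> M" for l s h' S H
    using above car that gamma_v_AElem_canonical[of Vp S H Fp] unfolding X c_le_def by fastforce
  have "VSt l s (h' |` stack_addrs Vp s) \<in> \<Inter>{S. \<exists>H. AElem S H \<in> M} \<and>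
      h' \<in> completion Fp (\<Inter>{H. \<exists>S. AElem S H \<in> M}) (h' |` stack_addrs Vp s)"
    if "(l, s, h') \<in> A" for l s h'
    using each[OF that] True by (subst completion_Inter) auto
  then have "A \<subseteq> {(l, s, h'). \<exists>h. VSt l s h \<in> \<Inter>{S. \<exists>H. AElem S H \<in> M} \<and>
      h' \<in> completion Fp (\<Inter>{H. \<exists>S. AElem S H \<in> M}) h}"
    by blast
  then show ?thesis
    using True unfolding X a_Inf_def gamma_v_def c_le_def by simp
qed (simp add: a_Inf_def gamma_v_def c_le_def)

theorem proposition4p1:
  fixes Vp :: "'v set" and Fp :: "'f set"
  shows "galois_connection (c_carrier Vp Fp) c_le (a_carrier Vp) a_le
           (alpha_v Vp Fp :: ('l::finite, 'v, 'f, 'a) state cdom \<Rightarrow> _) (gamma_v Fp)"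
proof -
  let ?above = "\<lambda>X. {W. a_carrier Vp W \<and> c_le X (gamma_v Fp W)}"
  have glb: "a_is_glb Vp (?above X) (alpha_v Vp Fp X)" for X :: "('l, 'v, 'f, 'a) state cdom"
    unfolding alpha_v_eq_a_Inf by (rule a_is_glb_a_Inf) blast
  have extensive: "c_le X (gamma_v Fp (alpha_v Vp Fp X))" for X :: "('l, 'v, 'f, 'a) state cdom"
    unfolding alpha_v_eq_a_Inf by (rule c_le_gamma_v_a_Inf) blast+
  have adjoint: "a_le (alpha_v Vp Fp X) V \<longleftrightarrow> c_le X (gamma_v Fp V)"
    if "a_carrier Vp V" for X :: "('l, 'v, 'f, 'a) state cdom" and V
    using that glb[of X] extensive[of X] gamma_v_mono c_le_trans unfolding a_is_glb_def by blast
  show ?thesis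
    using glb gamma_v_carrier adjoint unfolding galois_connection_def a_is_glb_def by blast
qed

end
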